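(* Let $N=3$ and let $\mathcal A$ be the algebra generated by $L_{ij}$ ($1\le i,j\le3$) subject to $\hat RL_2L_1=L_2L_1\hat R$ with $\hat R$ the braid matrix of type $\hat o(3)$. Then in $\mathcal A$ the six elements $$L_{11}L_{33}+q^{-1/2}L_{21}L_{23}+q^{-1}L_{31}L_{13},\quad q^{1/2}L_{12}L_{32}+L_{22}L_{22}+q^{-1/2}L_{32}L_{12},\quad qL_{13}L_{31}+q^{1/2}L_{23}L_{21}+L_{33}L_{11},$$ $$L_{11}L_{33}+q^{-1/2}L_{12}L_{32}+q^{-1}L_{13}L_{31},\quad q^{1/2}L_{21}L_{23}+L_{22}L_{22}+q^{-1/2}L_{23}L_{21},\quad qL_{31}L_{13}+q^{1/2}L_{32}L_{12}+L_{33}L_{11}$$ are all equal, and their common value $C$ is central in $\mathcal A$ (i.e. $CL_{ij}=L_{ij}C$ for all $i,j$).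
   Context: Fix nonzero complex $q$ with square root $q^{1/2}$. $(ij)$ denotes the $3\times3$ matrix unit, $i'=4-i$, $\rho=(\tfrac12,0,-\tfrac12)$, $P'_0=\sum_{i,j=1}^3q^{\rho_{i'}-\rho_j}(ij)\otimes(i'j')$, and $\hat R=I_9-e^{-\eta}P'_0$ with $e^{\eta}+e^{-\eta}=q+1+q^{-1}$. $L_1=\sum_{i,j}L_{ij}(ij)\otimes I_3$, $L_2=\sum_{k,l}L_{kl}I_3\otimes(kl)$, so $L_2L_1=\sum L_{kl}L_{ij}(ij)\otimes(kl)$. *)

theory Defs
  imports Complex_Main
begin

text \<open>A unital associative complex algebra is rendered as a ring 'a together with a
  unital ring homomorphism sc from the complex numbers into the centre of 'a.\<close>
definition complex_alg :: "(complex \<Rightarrow> 'a::ring_1) \<Rightarrow> bool" where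
  "complex_alg sc \<longleftrightarrow> sc 1 = 1 \<and> (\<forall>a b. sc (a + b) = sc a + sc b)
     \<and> (\<forall>a b. sc (a * b) = sc a * sc b) \<and> (\<forall>a x. sc a * x = x * sc a)"

text \<open>Entry of the 9x9 braid matrix Rhat = I - e^{-eta} P'_0 at row (i,k), column (j,l)
  (basis e_i tensor e_k), where s = q^{1/2}. The factor q^(rho_{i'} - rho_j) equals
  s^(i+j-4) since rho_m = (2-m)/2 and i' = 4-i.\<close>
definition Rhat :: "complex \<Rightarrow> complex \<Rightarrow> nat \<Rightarrow> nat \<Rightarrow> nat \<Rightarrow> nat \<Rightarrow> complex" where
  "Rhat s eta i k j l =
     (if i = j \<and> k = l then 1 else 0)
     - exp (- eta) * (if k = 4 - i \<and> l = 4 - j then s powi (int i + int j - 4) else 0)"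

text \<open>The RLL relation Rhat L2 L1 = L2 L1 Rhat, entrywise; the (i,k),(j,l) entry of
  L2 L1 is L k l * L i j.\<close>
definition RLL_rel :: "(complex \<Rightarrow> 'a::ring_1) \<Rightarrow> complex \<Rightarrow> complex \<Rightarrow> (nat \<Rightarrow> nat \<Rightarrow> 'a) \<Rightarrow> bool" where
  "RLL_rel sc s eta L \<longleftrightarrow>
    (\<forall>i\<in>{1..3}. \<forall>k\<in>{1..3}. \<forall>j\<in>{1..3}. \<forall>l\<in>{1..3}.
      (\<Sum>e\<in>{1..3}. \<Sum>f\<in>{1..3}. sc (Rhat s eta i k e f) * (L f l * L e j))
      = (\<Sum>e\<in>{1..3}. \<Sum>f\<in>{1..3}. (L k f * L i e) * sc (Rhat s eta e f j l)))"

end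

theory Submission
  imports Defs
begin

(* Since e^(-eta) is invertible, the RLL relation for Rhat = I - e^(-eta) P'_0 says exactly that P'_0
   commutes with L2 L1. But P'_0 = u u^T has rank one, with u_(i,k) = [k = i'] q^((i-2)/2), so
   u (u^T L2 L1) = (L2 L1 u) u^T forces u^T L2 L1 and L2 L1 u to be the same multiple C u of u
   (compare at the entry (2,2), where u is 1); the six nonzero entries give the six expressions
   for C. For centrality, the triple sum over x, y of q^((y-x)/2) L_(k,y') L_(x,y) L_(x',j) is
   C L_kj when its first two factors are summed over y, and L_kj C when its last two factors are
   summed over x. *)

lemma
  assumes "complex_alg sc"
  shows complex_alg_one: "sc 1 = 1"
    and complex_alg_add: "sc (a + b) = sc a + sc b"
    and complex_alg_mult: "sc (a * b) = sc a * sc b"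
    and complex_alg_commute: "sc a * x = x * sc a"
  using assms unfolding complex_alg_def by blast+

lemma complex_alg_diff:
  assumes "complex_alg sc"
  shows "sc (a - b) = sc a - sc b"
  using complex_alg_add[OF assms, of "a - b" b] by (simp add: eq_diff_eq)

lemma complex_alg_zero:
  assumes "complex_alg sc"
  shows "sc 0 = 0"
  using complex_alg_diff[OF assms, of 0 0] by simp

lemma complex_alg_indicator:
  assumes "complex_alg sc"
  shows "sc (if P then 1 else 0) = (if P then 1 else 0)"
  using complex_alg_one[OF assms] complex_alg_zero[OF assms] by simp

lemma atLeastAtMost_1_3: "{1..3::nat} = {1, 2, 3}"
  by auto

lemma sum_atLeastAtMost_1_3: "(\<Sum>e\<in>{1..3::nat}. f e) = f 1 + f 2 + f 3"
  unfolding atLeastAtMost_1_3 by (simp add: add.assoc)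

definition P0 :: "complex \<Rightarrow> nat \<Rightarrow> nat \<Rightarrow> nat \<Rightarrow> nat \<Rightarrow> complex" where
  "P0 s i k j l = (if k = 4 - i \<and> l = 4 - j then s powi (int i + int j - 4) else 0)"

lemma Rhat_eq_P0: "Rhat s eta i k j l = (if i = j \<and> k = l then 1 else 0) - exp (- eta) * P0 s i k j l"
  unfolding Rhat_def P0_def ..

lemma sum_delta_1_3:
  fixes i k :: nat
  assumes "i \<in> {1..3}" "k \<in> {1..3}"
  shows "(\<Sum>e\<in>{1..3}. \<Sum>f\<in>{1..3}. (if i = e \<and> k = f then 1 else 0) * M e f) = (M i k :: 'a::ring_1)"
    "(\<Sum>e\<in>{1..3}. \<Sum>f\<in>{1..3}. M e f * (if e = i \<and> f = k then 1 else 0)) = M i k"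
  using assms unfolding atLeastAtMost_1_3 by (auto simp: sum_atLeastAtMost_1_3)

lemma RLL_rel_P0_commute:
  assumes sc: "complex_alg sc" and RLL: "RLL_rel sc s eta L"
    and ik: "i \<in> {1..3}" "k \<in> {1..3}" and jl: "j \<in> {1..3}" "l \<in> {1..3}"
  shows "(\<Sum>e\<in>{1..3}. \<Sum>f\<in>{1..3}. sc (P0 s i k e f) * (L f l * L e j))
       = (\<Sum>e\<in>{1..3}. \<Sum>f\<in>{1..3}. (L k f * L i e) * sc (P0 s e f j l))"
    (is "?lhs = ?rhs")
proof -
  let ?x = "sc (exp (- eta))"
  have Rhat: "sc (Rhat s eta a b c d) = (if a = c \<and> b = d then 1 else 0) - ?x * sc (P0 s a b c d)"
    for a b c d
    by (simp add: Rhat_eq_P0 complex_alg_diff[OF sc] complex_alg_mult[OF sc]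
        complex_alg_indicator[OF sc])
  have "(\<Sum>e\<in>{1..3}. \<Sum>f\<in>{1..3}. sc (Rhat s eta i k e f) * (L f l * L e j))
      = (\<Sum>e\<in>{1..3}. \<Sum>f\<in>{1..3}. (L k f * L i e) * sc (Rhat s eta e f j l))"
    using RLL ik jl unfolding RLL_rel_def by blast
  moreover have "(\<Sum>e\<in>{1..3}. \<Sum>f\<in>{1..3}. sc (Rhat s eta i k e f) * (L f l * L e j))
      = L k l * L i j - ?x * ?lhs"
    unfolding Rhat left_diff_distrib sum_subtractf sum_delta_1_3[OF ik]
    by (simp add: sum_distrib_left mult.assoc)
  moreover have "(\<Sum>e\<in>{1..3}. \<Sum>f\<in>{1..3}. (L k f * L i e) * sc (Rhat s eta e f j l))
      = L k l * L i j - ?x * ?rhs"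
  proof -
    have "N * (?x * p) = ?x * (N * p)" for N p
      by (metis mult.assoc complex_alg_commute[OF sc])
    then show ?thesis
      unfolding Rhat right_diff_distrib sum_subtractf sum_delta_1_3[OF jl]
      by (simp add: sum_distrib_left)
  qed
  ultimately have "L k l * L i j - ?x * ?lhs = L k l * L i j - ?x * ?rhs"
    by simp
  then have "sc (exp eta) * (?x * ?lhs) = sc (exp eta) * (?x * ?rhs)"
    by simp
  moreover have "sc (exp eta) * ?x = 1"
    by (simp add: complex_alg_mult[OF sc, symmetric] complex_alg_one[OF sc] exp_minus_inverse)
  ultimately show ?thesis
    by (simp add: mult.assoc[symmetric])
qed

locale RLL_algebra =
  fixes sc :: "complex \<Rightarrow> 'a::ring_1" and s eta :: complex and L :: "nat \<Rightarrow> nat \<Rightarrow> 'a"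
  assumes complex_alg: "complex_alg sc" and RLL: "RLL_rel sc s eta L" and s_nonzero: "s \<noteq> 0"
begin

definition spow :: "int \<Rightarrow> 'a" where
  "spow n = sc (s powi n)"

lemma spow_0 [simp]: "spow 0 = 1"
  by (simp add: spow_def complex_alg_one[OF complex_alg])

lemma spow_add: "spow (m + n) = spow m * spow n"
  using s_nonzero by (simp add: spow_def power_int_add complex_alg_mult[OF complex_alg])

lemma spow_add_left: "spow m * (spow n * x) = spow (m + n) * x"
  by (simp add: spow_add mult.assoc)

lemma spow_commute: "spow n * x = x * spow n"
  unfolding spow_def by (rule complex_alg_commute[OF complex_alg])

lemma spow_left_commute: "x * (spow n * y) = spow n * (x * y)"
  by (metis mult.assoc spow_commute)

lemma sc_P0:
  "sc (P0 s i k e f) = (if k = 4 - i \<and> f = 4 - e then spow (int i - 2) * spow (int e - 2) else 0)"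
  unfolding P0_def spow_add[symmetric]
  by (simp add: spow_def complex_alg_zero[OF complex_alg] algebra_simps)

(* The (j,l) entry of u^T L2 L1 and the (i,k) entry of L2 L1 u. *)
definition left_contr :: "nat \<Rightarrow> nat \<Rightarrow> 'a" where
  "left_contr l j = (\<Sum>e\<in>{1..3}. spow (int e - 2) * (L (4 - e) l * L e j))"

definition right_contr :: "nat \<Rightarrow> nat \<Rightarrow> 'a" where
  "right_contr k i = (\<Sum>e\<in>{1..3}. spow (int e - 2) * (L k (4 - e) * L i e))"

lemma sum_P0_left:
  "(\<Sum>e\<in>{1..3}. \<Sum>f\<in>{1..3}. sc (P0 s i k e f) * X e f)
    = (if k = 4 - i then spow (int i - 2) * (\<Sum>e\<in>{1..3}. spow (int e - 2) * X e (4 - e)) else 0)"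
  unfolding sum_atLeastAtMost_1_3 by (simp add: sc_P0 distrib_left mult.assoc)

lemma sum_P0_right:
  "(\<Sum>e\<in>{1..3}. \<Sum>f\<in>{1..3}. X e f * sc (P0 s e f j l))
    = (if l = 4 - j then spow (int j - 2) * (\<Sum>e\<in>{1..3}. spow (int e - 2) * X e (4 - e)) else 0)"
proof -
  have "x * (spow m * spow n) = spow n * (spow m * x)" for x m n
    by (metis spow_commute mult.assoc)
  then show ?thesis
    unfolding sum_atLeastAtMost_1_3 by (simp add: sc_P0 distrib_left del: spow_0)
qed

lemma left_right_contr_relation:
  assumes "i \<in> {1..3}" "k \<in> {1..3}" "j \<in> {1..3}" "l \<in> {1..3}"
  shows "(if k = 4 - i then spow (int i - 2) * left_contr l j else 0)
       = (if l = 4 - j then spow (int j - 2) * right_contr k i else 0)"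
  using RLL_rel_P0_commute[OF complex_alg RLL assms]
  unfolding sum_P0_left sum_P0_right left_contr_def right_contr_def .

definition casimir :: 'a where
  "casimir = left_contr 2 2"

lemma right_contr_eq:
  assumes "i \<in> {1..3}" "k \<in> {1..3}"
  shows "right_contr k i = (if k = 4 - i then spow (int i - 2) * casimir else 0)"
  using left_right_contr_relation[OF assms, of 2 2] by (auto simp: casimir_def)

lemma left_contr_eq:
  assumes "j \<in> {1..3}" "l \<in> {1..3}"
  shows "left_contr l j = (if l = 4 - j then spow (int j - 2) * casimir else 0)"
  using left_right_contr_relation[of 2 2 j l] assms right_contr_eq[of 2 2] by simp

lemma casimir_central:
  assumes k: "k \<in> {1..3}" and j: "j \<in> {1..3}"
  shows "casimir * L k j = L k j * casimir"
proof -
  have "casimir * L k j = (\<Sum>x\<in>{1..3}. spow (2 - int x) * (right_contr k x * L (4 - x) j))"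
    using k unfolding atLeastAtMost_1_3
    by (auto simp: right_contr_eq mult.assoc spow_add_left)
  also have "\<dots> = (\<Sum>x\<in>{1..3}. \<Sum>y\<in>{1..3}. spow (int y - int x) * (L k (4 - y) * L x y * L (4 - x) j))"
    unfolding right_contr_def sum_distrib_left sum_distrib_right
    by (simp add: mult.assoc spow_add_left)
  also have "\<dots> = (\<Sum>y\<in>{1..3}. L k (4 - y) * (spow (int y - 2) * left_contr y j))"
    unfolding left_contr_def sum_distrib_left sum_atLeastAtMost_1_3
    by (simp only: distrib_left spow_add_left) (simp add: spow_left_commute mult.assoc add_ac)
  also have "\<dots> = L k j * casimir"
    using j unfolding atLeastAtMost_1_3
    by (auto simp: left_contr_eq spow_add_left)
  finally show ?thesis .
qed

lemma casimir_eq_left_contr: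
  assumes "j \<in> {1..3}"
  shows "casimir = spow (2 - int j) * left_contr (4 - j) j"
proof -
  have "left_contr (4 - j) j = spow (int j - 2) * casimir"
    using assms left_contr_eq[OF assms, of "4 - j"] by force
  then show ?thesis
    by (simp add: spow_add_left)
qed

lemma casimir_eq_right_contr:
  assumes "i \<in> {1..3}"
  shows "casimir = spow (2 - int i) * right_contr (4 - i) i"
proof -
  have "right_contr (4 - i) i = spow (int i - 2) * casimir"
    using assms right_contr_eq[OF assms, of "4 - i"] by force
  then show ?thesis
    by (simp add: spow_add_left)
qed

lemma casimir_expressions:
  "L 1 1 * L 3 3 + spow (-1) * (L 2 1 * L 2 3) + spow (-2) * (L 3 1 * L 1 3) = casimir"
  "spow 1 * (L 1 2 * L 3 2) + L 2 2 * L 2 2 + spow (-1) * (L 3 2 * L 1 2) = casimir"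
  "spow 2 * (L 1 3 * L 3 1) + spow 1 * (L 2 3 * L 2 1) + L 3 3 * L 1 1 = casimir"
  "L 1 1 * L 3 3 + spow (-1) * (L 1 2 * L 3 2) + spow (-2) * (L 1 3 * L 3 1) = casimir"
  "spow 1 * (L 2 1 * L 2 3) + L 2 2 * L 2 2 + spow (-1) * (L 2 3 * L 2 1) = casimir"
  "spow 2 * (L 3 1 * L 1 3) + spow 1 * (L 3 2 * L 1 2) + L 3 3 * L 1 1 = casimir"
  using casimir_eq_left_contr[of 3] casimir_eq_left_contr[of 2] casimir_eq_left_contr[of 1]
    casimir_eq_right_contr[of 3] casimir_eq_right_contr[of 2] casimir_eq_right_contr[of 1]
  unfolding left_contr_def right_contr_def sum_atLeastAtMost_1_3
  by (simp_all add: distrib_left spow_add_left add_ac)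

end

theorem mainTheorem5:
  fixes q s eta :: complex and sc :: "complex \<Rightarrow> 'a::ring_1" and L :: "nat \<Rightarrow> nat \<Rightarrow> 'a"
  assumes "q \<noteq> 0" and "s ^ 2 = q"
    and "exp eta + exp (- eta) = q + 1 + inverse q"
    and "complex_alg sc"
    and "RLL_rel sc s eta L"
  defines "C \<equiv> L 1 1 * L 3 3 + sc (inverse s) * (L 2 1 * L 2 3) + sc (inverse q) * (L 3 1 * L 1 3)"
  shows "sc s * (L 1 2 * L 3 2) + L 2 2 * L 2 2 + sc (inverse s) * (L 3 2 * L 1 2) = C
    \<and> sc q * (L 1 3 * L 3 1) + sc s * (L 2 3 * L 2 1) + L 3 3 * L 1 1 = C
    \<and> L 1 1 * L 3 3 + sc (inverse s) * (L 1 2 * L 3 2) + sc (inverse q) * (L 1 3 * L 3 1) = C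
    \<and> sc s * (L 2 1 * L 2 3) + L 2 2 * L 2 2 + sc (inverse s) * (L 2 3 * L 2 1) = C
    \<and> sc q * (L 3 1 * L 1 3) + sc s * (L 3 2 * L 1 2) + L 3 3 * L 1 1 = C
    \<and> (\<forall>i\<in>{1..3}. \<forall>j\<in>{1..3}. C * L i j = L i j * C)"
proof -
  \<comment> \<open>Only the invertibility of e^(-eta) is needed, not the constraint on e^eta.\<close>
  from assms(1,2) have "s \<noteq> 0" by auto
  with assms(4,5) interpret RLL_algebra sc s eta L
    by unfold_locales
  have scalars: "sc s = spow 1" "sc (inverse s) = spow (-1)" "sc q = spow 2" "sc (inverse q) = spow (-2)"
    unfolding spow_def assms(2)[symmetric] by (simp_all add: power_int_minus)
  have "C = casimir"
    unfolding C_def scalars by (rule casimir_expressions(1))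
  then show ?thesis
    unfolding scalars using casimir_expressions casimir_central by simp
qed

end
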